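(* Assume the setting of the transformation mechanism below, and further assume $a\ge0$ and that every record $r$ has attribute $r.c\ge0$. Let $q(D)=\sum_{r\in D}r.c$. Then the per-record sensitivity of $D\mapsto f(q(D)+a)$ is $\Delta_f(r)=f(r.c+a)-f(a)$, and the mechanism $M(D)=g\big(f(q(D)+a)+Z\big)$, $Z\sim\operatorname{Lap}(0,b)$, satisfies $P$-PRDP with policy function $P(r)=[f(r.c+a)-f(a)]/b$.
   Context: Setting: $b\in(0,\infty)$, $f:[a,\infty)\to\mathbb{R}$ is concave and strictly increasing, $g:\mathbb{R}\to\mathbb{R}$ is measurable, and $Z\sim\operatorname{Lap}(0,b)$ (density $\frac{1}{2b}e^{-|x|/b}$) is independent of the data. Databases are finite multisets of records (including the empty database); $D,D'$ are neighbors differing on record $r$ if their symmetric difference $D\ominus D'=\{r\}$. The per-record sensitivity of a real-valued query $u$ at record $r$ is $\sup\{|u(D)-u(D')|:D\ominus D'=\{r\}\}$. A mechanism $M$ satisfies $P$-PRDP if for every record $r$, every $D,D'$ with $D\ominus D'=\{r\}$, and every measurable $S$, $\Pr[M(D)\in S]\le e^{P(r)}\Pr[M(D')\in S]$. *)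

theory Defs
  imports "HOL-Probability.Probability" "HOL-Library.Multiset"
begin

definition neighbors :: "'r \<Rightarrow> 'r multiset \<Rightarrow> 'r multiset \<Rightarrow> bool" where
  "neighbors r D D' \<longleftrightarrow> (D - D') + (D' - D) = {#r#}"

definition per_record_sensitivity :: "('r multiset \<Rightarrow> real) \<Rightarrow> 'r \<Rightarrow> real" where
  "per_record_sensitivity u r = Sup {\<bar>u D - u D'\<bar> | D D'. neighbors r D D'}"

definition PRDP :: "('r multiset \<Rightarrow> 'b measure) \<Rightarrow> ('r \<Rightarrow> real) \<Rightarrow> bool" where
  "PRDP M P \<longleftrightarrow> (\<forall>r D D' S. neighbors r D D' \<longrightarrow> S \<in> sets (M D) \<longrightarrow>
      measure (M D) S \<le> exp (P r) * measure (M D') S)"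

definition laplace :: "real \<Rightarrow> real measure" where
  "laplace b = density lborel (\<lambda>x. ennreal (exp (- \<bar>x\<bar> / b) / (2 * b)))"

definition sum_query :: "('r \<Rightarrow> real) \<Rightarrow> 'r multiset \<Rightarrow> real" where
  "sum_query c D = sum_mset (image_mset c D)"

definition laplace_transform_mech ::
  "real \<Rightarrow> (real \<Rightarrow> real) \<Rightarrow> ('r multiset \<Rightarrow> real) \<Rightarrow> 'r multiset \<Rightarrow> real measure" where
  "laplace_transform_mech b g u D = distr (laplace b) borel (\<lambda>z. g (u D + z))"

end

theory Submission imports Defs begin

text \<open>Adding a record r moves q(D) + a up by c r from a point at least a; by concavity
  of f such a step raises f by at most f (c r + a) - f a, and the step from the empty
  database attains this bound, so it is the per-record sensitivity. The Laplace density
  changes by at most the factor exp (\<bar>u - v\<bar> / b) when its centre moves from v to u,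
  which gives the privacy bound for every post-processing g.\<close>

lemma concave_on_increment_antimono:
  fixes f :: "real \<Rightarrow> real"
  assumes f: "concave_on S f" and S: "x \<in> S" "y + t \<in> S" and xy: "x \<le> y" and t: "0 \<le> t"
  shows "f (y + t) - f y \<le> f (x + t) - f x"
proof (cases "x = y \<or> t = 0")
  case True
  then show ?thesis by auto
next
  case False
  then have s: "0 < y + t - x" using xy t by auto
  define \<theta> where "\<theta> = t / (y + t - x)"
  have \<theta>: "0 \<le> \<theta>" "\<theta> \<le> 1" using s xy t by (auto simp: \<theta>_def divide_simps)
  have \<theta>s: "\<theta> * (y + t - x) = t" using s by (simp add: \<theta>_def)
  have "(1 - \<theta>) *\<^sub>R (y + t) + \<theta> *\<^sub>R x = y"
    using \<theta>s by (simp add: algebra_simps)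
  then have "f y \<ge> (1 - \<theta>) * f (y + t) + \<theta> * f x"
    using concave_onD[OF f \<theta>, of "y + t" x] S by simp
  moreover have "(1 - \<theta>) *\<^sub>R x + \<theta> *\<^sub>R (y + t) = x + t"
    using \<theta>s by (simp add: algebra_simps)
  then have "f (x + t) \<ge> (1 - \<theta>) * f x + \<theta> * f (y + t)"
    using concave_onD[OF f \<theta>, of x "y + t"] S by simp
  ultimately show ?thesis by (simp add: algebra_simps)
qed

lemma neighbors_cases:
  assumes "neighbors r D D'"
  obtains "D = D' + {#r#}" | "D' = D + {#r#}"
proof -
  have "D - D' = {#r#} \<and> D' - D = {#} \<or> D - D' = {#} \<and> D' - D = {#r#}"
    using assms by (simp add: neighbors_def union_is_single)
  then show ?thesis
    using that by (metis add.commute subset_mset.add_diff_inverse Diff_eq_empty_iff_mset)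
qed

lemma neighbors_abs_diff_le:
  fixes u :: "'r multiset \<Rightarrow> real"
  assumes add_le: "\<And>D. \<bar>u (D + {#r#}) - u D\<bar> \<le> d" and "neighbors r D D'"
  shows "\<bar>u D - u D'\<bar> \<le> d"
  using assms(2)
proof (cases rule: neighbors_cases)
  case 1
  then show ?thesis using add_le[of D'] by simp
next
  case 2
  then show ?thesis using add_le[of D] by (simp add: abs_minus_commute[of "u D"])
qed

lemma per_record_sensitivity_eqI:
  assumes "\<And>D D'. neighbors r D D' \<Longrightarrow> \<bar>u D - u D'\<bar> \<le> d"
    and "neighbors r D\<^sub>0 D\<^sub>0'" and "\<bar>u D\<^sub>0 - u D\<^sub>0'\<bar> = d"
  shows "per_record_sensitivity u r = d"
  unfolding per_record_sensitivity_def
proof (rule cSup_eq_maximum)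
  show "d \<in> {\<bar>u D - u D'\<bar> |D D'. neighbors r D D'}" using assms(2,3) by force
qed (use assms(1) in auto)

lemma sum_query_nonneg: "(\<And>r. 0 \<le> c r) \<Longrightarrow> 0 \<le> sum_query c D"
  unfolding sum_query_def by (induction D) auto

lemma sum_query_add_mset [simp]: "sum_query c (add_mset r D) = c r + sum_query c D"
  by (simp add: sum_query_def)

lemma concave_sum_query_add_single_le:
  fixes f :: "real \<Rightarrow> real"
  assumes f_concave: "concave_on {a..} f" and f_mono: "mono_on {a..} f"
    and c_nonneg: "\<And>r. 0 \<le> c r"
  shows "\<bar>f (sum_query c (D + {#r#}) + a) - f (sum_query c D + a)\<bar> \<le> f (c r + a) - f a"
proof -
  have q: "0 \<le> sum_query c D" by (rule sum_query_nonneg[OF c_nonneg])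
  have "f (sum_query c D + a) \<le> f (sum_query c D + a + c r)"
    using q c_nonneg[of r] by (intro mono_onD[OF f_mono]) auto
  moreover have "f (sum_query c D + a + c r) - f (sum_query c D + a) \<le> f (a + c r) - f a"
    using q c_nonneg[of r] by (intro concave_on_increment_antimono[OF f_concave]) auto
  ultimately show ?thesis by (simp add: algebra_simps abs_le_iff)
qed

lemma laplace_density_shift_le:
  fixes b u v x :: real
  assumes "0 < b"
  shows "exp (- \<bar>x - u\<bar> / b) / (2 * b) \<le> exp (\<bar>u - v\<bar> / b) * (exp (- \<bar>x - v\<bar> / b) / (2 * b))"
proof -
  have "- \<bar>x - u\<bar> / b \<le> \<bar>u - v\<bar> / b + - \<bar>x - v\<bar> / b"
    using assms by (simp add: divide_simps)
  then have "exp (- \<bar>x - u\<bar> / b) \<le> exp (\<bar>u - v\<bar> / b) * exp (- \<bar>x - v\<bar> / b)"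
    by (simp flip: exp_add)
  then show ?thesis
    using assms by (simp add: divide_right_mono flip: mult.assoc)
qed

lemma emeasure_laplace_translate:
  fixes b w :: real
  assumes [measurable]: "A \<in> sets borel"
  shows "emeasure (laplace b) {z. w + z \<in> A}
    = (\<integral>\<^sup>+x. ennreal (exp (- \<bar>x - w\<bar> / b) / (2 * b)) * indicator A x \<partial>lborel)"
proof -
  define p where "p = (\<lambda>x::real. ennreal (exp (- \<bar>x\<bar> / b) / (2 * b)))"
  have [measurable]: "p \<in> borel_measurable borel" unfolding p_def by measurable
  have "emeasure (laplace b) {z. w + z \<in> A} = (\<integral>\<^sup>+z. p z * indicator {z. w + z \<in> A} z \<partial>lborel)"
    unfolding laplace_def p_def by (simp add: emeasure_density)
  also have "\<dots> = (\<integral>\<^sup>+z. p ((w + 1 * z) - w) * indicator A (w + 1 * z) \<partial>lborel)"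
    by (auto intro!: nn_integral_cong simp: indicator_def)
  also have "\<dots> = (\<integral>\<^sup>+x. p (x - w) * indicator A x \<partial>lborel)"
    using nn_integral_real_affine[where c=1 and t=w and f="\<lambda>x. p (x - w) * indicator A x"] by simp
  finally show ?thesis by (simp add: p_def)
qed

lemma emeasure_laplace_finite:
  fixes b :: real
  assumes b: "0 < b"
  shows "emeasure (laplace b) X < \<infinity>"
proof -
  define E where "E = exponential_density (1 / b)"
  have [measurable]: "E \<in> borel_measurable borel" unfolding E_def by measurable
  have E: "(\<integral>\<^sup>+x. ennreal (E x) \<partial>lborel) = 1"
  proof -
    interpret prob_space "density lborel E"
      unfolding E_def using prob_space_exponential_density[of "1 / b"] b by simp
    show ?thesis using emeasure_space_1 by (simp add: emeasure_density)
  qed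
  have E_reflect: "(\<integral>\<^sup>+x. ennreal (E (- x)) \<partial>lborel) = 1"
    using nn_integral_real_affine[where c="-1" and t=0 and f="\<lambda>x. ennreal (E x)"] E by simp
  \<comment> \<open>the Laplace density is the average of an exponential density and its reflection\<close>
  have dens: "exp (- \<bar>x\<bar> / b) / (2 * b) \<le> E x + E (- x)" for x
    unfolding E_def exponential_density_def using b
    by (cases "x < 0"; cases "x = 0") (auto simp: field_simps)
  have "emeasure (laplace b) X \<le> emeasure (laplace b) (space (laplace b))"
    by (rule emeasure_space)
  also have "\<dots> = (\<integral>\<^sup>+x. ennreal (exp (- \<bar>x\<bar> / b) / (2 * b)) \<partial>lborel)"
    unfolding laplace_def by (simp add: emeasure_density)
  also have "\<dots> \<le> (\<integral>\<^sup>+x. ennreal (E x) + ennreal (E (- x)) \<partial>lborel)"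
    using dens b by (intro nn_integral_mono)
      (simp add: E_def exponential_density_def flip: ennreal_plus)
  also have "\<dots> = 2" by (subst nn_integral_add) (auto simp: E E_reflect)
  finally show ?thesis by (simp add: le_less_trans)
qed

lemma measure_laplace_shift_le:
  fixes b u v :: real
  assumes b: "0 < b" and A [measurable]: "A \<in> sets borel"
  shows "measure (laplace b) {z. u + z \<in> A}
    \<le> exp (\<bar>u - v\<bar> / b) * measure (laplace b) {z. v + z \<in> A}"
proof -
  define K where "K = exp (\<bar>u - v\<bar> / b)"
  have "ennreal (exp (- \<bar>x - u\<bar> / b) / (2 * b))
      \<le> ennreal K * ennreal (exp (- \<bar>x - v\<bar> / b) / (2 * b))" for x
    using laplace_density_shift_le[OF b, of x u v] b
    by (simp add: K_def ennreal_leI flip: ennreal_mult)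
  then have "emeasure (laplace b) {z. u + z \<in> A} \<le> ennreal K * emeasure (laplace b) {z. v + z \<in> A}"
    unfolding emeasure_laplace_translate[OF A]
    by (subst nn_integral_cmult[symmetric]) (auto intro!: nn_integral_mono simp: indicator_def)
  then have "ennreal (measure (laplace b) {z. u + z \<in> A})
      \<le> ennreal (K * measure (laplace b) {z. v + z \<in> A})"
    using emeasure_laplace_finite[OF b]
    by (simp add: emeasure_eq_ennreal_measure less_top[symmetric] ennreal_mult K_def)
  then show ?thesis
    by (subst (asm) ennreal_le_iff) (auto simp: K_def)
qed

lemma measure_laplace_transform_mech:
  assumes [measurable]: "g \<in> borel_measurable borel" and S: "S \<in> sets borel"
  shows "measure (laplace_transform_mech b g u D) S = measure (laplace b) {z. u D + z \<in> g -` S}"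
proof -
  have [measurable]: "(\<lambda>z. g (u D + z)) \<in> borel_measurable (laplace b)"
    unfolding laplace_def by measurable
  show ?thesis
    unfolding laplace_transform_mech_def
    by (subst measure_distr) (auto simp: S laplace_def vimage_def)
qed

lemma PRDP_laplace_transform_mech:
  assumes b: "0 < b" and g: "g \<in> borel_measurable borel"
    and sens: "\<And>r D D'. neighbors r D D' \<Longrightarrow> \<bar>u D - u D'\<bar> \<le> \<Delta> r"
  shows "PRDP (laplace_transform_mech b g u) (\<lambda>r. \<Delta> r / b)"
  unfolding PRDP_def
proof (intro allI impI)
  fix r D D' S
  assume nb: "neighbors r D D'" and "S \<in> sets (laplace_transform_mech b g u D)"
  then have S: "S \<in> sets borel" by (simp add: laplace_transform_mech_def)
  have A: "g -` S \<in> sets borel" using measurable_sets[OF g S] by simp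
  have "measure (laplace b) {z. u D + z \<in> g -` S}
      \<le> exp (\<bar>u D - u D'\<bar> / b) * measure (laplace b) {z. u D' + z \<in> g -` S}"
    by (rule measure_laplace_shift_le[OF b A])
  also have "\<dots> \<le> exp (\<Delta> r / b) * measure (laplace b) {z. u D' + z \<in> g -` S}"
    using sens[OF nb] b by (intro mult_right_mono) (auto simp: divide_right_mono)
  finally show "measure (laplace_transform_mech b g u D) S
      \<le> exp (\<Delta> r / b) * measure (laplace_transform_mech b g u D') S"
    by (simp add: measure_laplace_transform_mech[OF g S])
qed

theorem mainTheorem9:
  fixes b a :: real and f g :: "real \<Rightarrow> real" and c :: "'r \<Rightarrow> real"
  assumes b_pos: "0 < b"
    and f_concave: "concave_on {a..} f"
    and f_incr: "strict_mono_on {a..} f"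
    and g_meas: "g \<in> borel_measurable borel"
    and a_nonneg: "0 \<le> a"
    and c_nonneg: "\<And>r. 0 \<le> c r"
  shows "(\<forall>r. per_record_sensitivity (\<lambda>D. f (sum_query c D + a)) r = f (c r + a) - f a)
       \<and> PRDP (laplace_transform_mech b g (\<lambda>D. f (sum_query c D + a)))
              (\<lambda>r. (f (c r + a) - f a) / b)"
proof -
  define u where "u = (\<lambda>D. f (sum_query c D + a))"
  have f_mono: "mono_on {a..} f" by (rule strict_mono_on_imp_mono_on[OF f_incr])
  have sens: "\<bar>u D - u D'\<bar> \<le> f (c r + a) - f a" if "neighbors r D D'" for r D D'
    using concave_sum_query_add_single_le[OF f_concave f_mono c_nonneg] that
    unfolding u_def by (rule neighbors_abs_diff_le)
  have attained: "\<bar>u {#r#} - u {#}\<bar> = f (c r + a) - f a" for r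
    using mono_onD[OF f_mono, of a "c r + a"] c_nonneg[of r] by (simp add: u_def sum_query_def)
  have singleton: "neighbors r {#r#} {#}" for r :: 'r
    by (simp add: neighbors_def)
  have "per_record_sensitivity u r = f (c r + a) - f a" for r
    by (rule per_record_sensitivity_eqI[OF sens singleton attained])
  moreover have "PRDP (laplace_transform_mech b g u) (\<lambda>r. (f (c r + a) - f a) / b)"
    by (rule PRDP_laplace_transform_mech[OF b_pos g_meas sens])
  ultimately show ?thesis unfolding u_def by simp
qed

end
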